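(* Define, for integers $n,m,p\ge0$, $$\mathcal{Z}_{n,m}(p)=\binom{m+p}{p}\sum_{k=0}^{m}s(m,k)\,\mathcal{B}_{n+k,p}.$$ Then for all integers $n,m,p\ge0$, $$\mathcal{Z}_{n+1,m}(p)=\frac{m+1}{m+p+1}\,\mathcal{Z}_{n,m+1}(p)+m\,\mathcal{Z}_{n,m}(p),$$ and $\mathcal{Z}_{0,m}(p)=1$, $\mathcal{Z}_{n,0}(p)=\mathcal{B}_{n,p}$.
   Context: $s(m,k)$ are the signed Stirling numbers of the first kind, defined by $x(x-1)\cdots(x-m+1)=\sum_{k=0}^m s(m,k)x^k$. For an integer $p\ge0$, the $p$-Bell numbers $\mathcal{B}_{n,p}$ are defined by $\sum_{n\ge0}\mathcal{B}_{n,p}\frac{z^n}{n!}=\sum_{n\ge0}\binom{n+p}{p}^{-1}\frac{(e^z-1)^n}{n!}$. *)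

theory Defs
  imports "HOL-Computational_Algebra.Computational_Algebra"
begin

definition stirling1s :: "nat \<Rightarrow> nat \<Rightarrow> int" where
  "stirling1s m k = coeff (\<Prod>i<m. [:- int i, 1:]) k"

text \<open>p-Bell numbers, defined by extracting the coefficient of z^n/n! from the
  exponential generating function sum_j binom(j+p,p)^(-1) (e^z-1)^j/j!.
  The series (e^z-1)^j has order j, so only the terms j \<le> n contribute to the
  n-th coefficient; the sum is therefore taken over j \<le> n.\<close>
definition pBell :: "nat \<Rightarrow> nat \<Rightarrow> real" where
  "pBell n p = fact n * (\<Sum>j\<le>n. fps_nth ((fps_exp 1 - 1) ^ j) n
                     / (fact j * real ((j + p) choose p)))"

definition Zp :: "nat \<Rightarrow> nat \<Rightarrow> nat \<Rightarrow> real" where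
  "Zp n m p = real ((m + p) choose p) * (\<Sum>k\<le>m. real_of_int (stirling1s m k) * pBell (n + k) p)"

end

theory Submission
  imports Defs
begin

text \<open>Expanding (e^z - 1)^j binomially, the Stirling numbers of the first kind invert the
  coefficients: sum_k s(m,k) k! [z^k] (e^z - 1)^j equals m! if j = m and 0 if j < m, because
  sum_k s(m,k) i^k is the falling factorial i(i-1)...(i-m+1), which vanishes for i < m.
  Hence sum_k s(m,k) B_{k,p} = binom(m+p,p)^(-1), i.e. Z_{0,m}(p) = 1. The recurrence in n
  comes from s(m+1,k) = s(m,k-1) - m s(m,k) together with
  (m+p+1) binom(m+p,p) = (m+1) binom(m+p+1,p).\<close>

lemma stirling1s_0: "stirling1s 0 k = (if k = 0 then 1 else 0)"
  by (simp add: stirling1s_def)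

lemma stirling1s_Suc:
  "stirling1s (Suc m) k = - int m * stirling1s m k + (case k of 0 \<Rightarrow> 0 | Suc k' \<Rightarrow> stirling1s m k')"
proof -
  have "(\<Prod>i<Suc m. [:- int i, 1:])
      = smult (- int m) (\<Prod>i<m. [:- int i, 1:]) + pCons 0 (\<Prod>i<m. [:- int i, 1:])"
    by (simp add: mult_pCons_right)
  then show ?thesis
    by (simp add: stirling1s_def coeff_pCons split: nat.split)
qed

lemma stirling1s_eq_0: "m < k \<Longrightarrow> stirling1s m k = 0"
  by (induction m arbitrary: k) (simp_all add: stirling1s_0 stirling1s_Suc split: nat.split)

lemma sum_stirling1s_Suc:
  fixes f :: "nat \<Rightarrow> 'a::comm_ring_1"
  shows "(\<Sum>k\<le>Suc m. of_int (stirling1s (Suc m) k) * f k)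
       = (\<Sum>k\<le>m. of_int (stirling1s m k) * f (Suc k)) - of_nat m * (\<Sum>k\<le>m. of_int (stirling1s m k) * f k)"
proof -
  have "of_int (stirling1s (Suc m) k) * f k
      = of_int (case k of 0 \<Rightarrow> 0 | Suc k' \<Rightarrow> stirling1s m k') * f k - of_nat m * (of_int (stirling1s m k) * f k)"
    for k by (simp add: stirling1s_Suc algebra_simps)
  then have "(\<Sum>k\<le>Suc m. of_int (stirling1s (Suc m) k) * f k)
      = (\<Sum>k\<le>Suc m. of_int (case k of 0 \<Rightarrow> 0 | Suc k' \<Rightarrow> stirling1s m k') * f k)
        - (\<Sum>k\<le>Suc m. of_nat m * (of_int (stirling1s m k) * f k))"
    by (simp add: sum_subtractf)
  also have "(\<Sum>k\<le>Suc m. of_int (case k of 0 \<Rightarrow> 0 | Suc k' \<Rightarrow> stirling1s m k') * f k)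
      = (\<Sum>k\<le>m. of_int (stirling1s m k) * f (Suc k))"
    by (subst sum.atMost_Suc_shift) simp
  also have "(\<Sum>k\<le>Suc m. of_nat m * (of_int (stirling1s m k) * f k))
      = of_nat m * (\<Sum>k\<le>m. of_int (stirling1s m k) * f k)"
    by (simp add: stirling1s_eq_0 sum_distrib_left)
  finally show ?thesis .
qed

lemma sum_stirling1s_power:
  fixes x :: "'a::comm_ring_1"
  shows "(\<Sum>k\<le>m. of_int (stirling1s m k) * x ^ k) = (\<Prod>l<m. x - of_nat l)"
proof (induction m)
  case 0
  then show ?case by (simp add: stirling1s_0)
next
  case (Suc m)
  have "(\<Sum>k\<le>m. of_int (stirling1s m k) * x ^ Suc k) = x * (\<Sum>k\<le>m. of_int (stirling1s m k) * x ^ k)"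
    by (simp add: sum_distrib_left mult_ac)
  then show ?case
    using sum_stirling1s_Suc[of m "\<lambda>k. x ^ k"] Suc by (simp add: algebra_simps)
qed

lemma prod_of_nat_diff_lessThan_eq_0:
  "i < m \<Longrightarrow> (\<Prod>l<m. of_nat i - of_nat l :: 'a::comm_ring_1) = 0"
  by (rule prod_zero) auto

lemma prod_of_nat_diff_lessThan_self: "(\<Prod>l<m. of_nat m - of_nat l :: 'a::{comm_ring_1,semiring_char_0}) = fact m"
proof -
  have "(\<Prod>l<m. of_nat m - of_nat l :: 'a) = (\<Prod>l<m. of_nat (m - l))"
    by (intro prod.cong refl) (simp add: of_nat_diff)
  also have "\<dots> = fact m"
    by (simp add: fact_prod_rev atLeast0LessThan)
  finally show ?thesis .
qed

lemma fps_exp_minus_one_power: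
  "(fps_exp (1::'a::field_char_0) - 1) ^ j
     = (\<Sum>i\<le>j. fps_const (of_nat (j choose i) * (-1) ^ (j - i)) * fps_exp (of_nat i))"
proof -
  have neg_one_power: "(-1 :: 'a fps) ^ k = fps_const ((-1) ^ k)" for k
    by (metis fps_const_neg fps_const_1_eq_1 fps_const_power)
  have "(fps_exp (1::'a) - 1) ^ j = (\<Sum>i\<le>j. of_nat (j choose i) * fps_exp 1 ^ i * (-1) ^ (j - i))"
    using binomial_ring[of "fps_exp (1::'a)" "-1" j] by simp
  also have "\<dots> = (\<Sum>i\<le>j. fps_const (of_nat (j choose i)) * fps_exp (of_nat i) * fps_const ((-1) ^ (j - i)))"
    by (simp add: fps_exp_power_mult fps_of_nat neg_one_power)
  also have "\<dots> = (\<Sum>i\<le>j. fps_const (of_nat (j choose i) * (-1) ^ (j - i)) * fps_exp (of_nat i))"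
    by (simp add: fps_const_mult[symmetric] mult_ac del: fps_const_mult)
  finally show ?thesis .
qed

lemma fact_mult_fps_nth_exp_minus_one_power:
  "fact k * ((fps_exp (1::'a::field_char_0) - 1) ^ j $ k)
     = (\<Sum>i\<le>j. of_nat (j choose i) * (-1) ^ (j - i) * of_nat i ^ k)"
  by (simp add: fps_exp_minus_one_power fps_sum_nth sum_distrib_left)

lemma fps_nth_exp_minus_one_power_eq_0:
  "k < j \<Longrightarrow> (fps_exp (1::'a::field_char_0) - 1) ^ j $ k = 0"
  using startsby_zero_power_prefix[of "fps_exp (1::'a) - 1" j] by simp

lemma sum_stirling1s_fps_exp_minus_one_power:
  assumes "j \<le> m"
  shows "(\<Sum>k\<le>m. of_int (stirling1s m k) * (fact k * ((fps_exp (1::'a::field_char_0) - 1) ^ j $ k)))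
       = (if j = m then fact m else 0)"
proof -
  have "(\<Sum>k\<le>m. of_int (stirling1s m k) * (fact k * ((fps_exp (1::'a) - 1) ^ j $ k)))
      = (\<Sum>k\<le>m. \<Sum>i\<le>j. of_nat (j choose i) * (-1) ^ (j - i) * (of_int (stirling1s m k) * of_nat i ^ k))"
    by (simp add: fact_mult_fps_nth_exp_minus_one_power sum_distrib_left mult_ac)
  also have "\<dots> = (\<Sum>i\<le>j. of_nat (j choose i) * (-1) ^ (j - i) * (\<Prod>l<m. of_nat i - of_nat l))"
    by (subst sum.swap) (simp add: sum_distrib_left[symmetric] sum_stirling1s_power)
  also have "\<dots> = (if j = m then fact m else 0)"
  proof (cases "j = m")
    case True
    then show ?thesis
      by (simp add: lessThan_Suc_atMost[symmetric] prod_of_nat_diff_lessThan_self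
          prod_of_nat_diff_lessThan_eq_0)
  next
    case False
    with assms show ?thesis
      by (auto intro!: sum.neutral simp: prod_of_nat_diff_lessThan_eq_0)
  qed
  finally show ?thesis .
qed

lemma sum_stirling1s_pBell: "(\<Sum>k\<le>m. of_int (stirling1s m k) * pBell k p) = 1 / real ((m + p) choose p)"
proof -
  define a where "a j k = (fps_exp (1::real) - 1) ^ j $ k" for j k
  define c where "c j = fact j * real ((j + p) choose p)" for j
  have pBell_atMost: "pBell k p = (\<Sum>j\<le>m. fact k * a j k / c j)" if "k \<le> m" for k
  proof -
    have "pBell k p = (\<Sum>j\<le>k. fact k * a j k / c j)"
      by (simp add: pBell_def a_def c_def sum_distrib_left)
    also have "\<dots> = (\<Sum>j\<le>m. fact k * a j k / c j)"
      by (rule sum.mono_neutral_left) (use that in \<open>auto simp: a_def fps_nth_exp_minus_one_power_eq_0\<close>)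
    finally show ?thesis .
  qed
  have "(\<Sum>k\<le>m. of_int (stirling1s m k) * pBell k p)
      = (\<Sum>k\<le>m. \<Sum>j\<le>m. of_int (stirling1s m k) * (fact k * a j k) / c j)"
    by (intro sum.cong refl) (simp add: pBell_atMost sum_distrib_left)
  also have "\<dots> = (\<Sum>j\<le>m. (\<Sum>k\<le>m. of_int (stirling1s m k) * (fact k * a j k)) / c j)"
    by (subst sum.swap) (simp add: sum_divide_distrib)
  also have "\<dots> = (\<Sum>j\<le>m. if j = m then fact m / c m else 0)"
    by (intro sum.cong refl) (simp add: a_def sum_stirling1s_fps_exp_minus_one_power)
  also have "\<dots> = 1 / real ((m + p) choose p)"
    by (simp add: c_def)
  finally show ?thesis .
qed

lemma Suc_add_mult_binomial: "(m + p + 1) * ((m + p) choose p) = (m + 1) * ((m + 1 + p) choose p)"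
proof -
  have "Suc (m + p) * ((m + p) choose m) = (Suc (m + p) choose Suc m) * Suc m"
    by (rule Suc_times_binomial_eq)
  moreover have "(m + p) choose m = (m + p) choose p" "Suc (m + p) choose Suc m = (m + 1 + p) choose p"
    using binomial_symmetric[of m "m + p"] binomial_symmetric[of "Suc m" "Suc (m + p)"] by simp_all
  ultimately show ?thesis
    by (simp add: mult_ac)
qed

lemma Zp_Suc_left:
  "Zp (n + 1) m p = real (m + 1) / real (m + p + 1) * Zp n (m + 1) p + real m * Zp n m p"
proof -
  define S where "S m' n' = (\<Sum>k\<le>m'. of_int (stirling1s m' k) * pBell (n' + k) p)" for m' n'
  have Zp_S: "Zp n' m' p = real ((m' + p) choose p) * S m' n'" for n' m'
    by (simp add: Zp_def S_def)
  have S_Suc: "S (m + 1) n = S m (n + 1) - real m * S m n"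
    using sum_stirling1s_Suc[of m "\<lambda>k. pBell (n + k) p"] by (simp add: S_def)
  have binomial: "real ((m + p) choose p) * real (m + p + 1) = real ((m + 1 + p) choose p) * real (m + 1)"
    using Suc_add_mult_binomial[of m p] by (simp only: of_nat_mult[symmetric] mult_ac)
  show ?thesis
    unfolding Zp_S S_Suc using binomial by (simp add: field_simps)
qed

theorem mainTheorem9:
  fixes n m p :: nat
  shows "Zp (n + 1) m p = real (m + 1) / real (m + p + 1) * Zp n (m + 1) p + real m * Zp n m p
         \<and> Zp 0 m p = 1
         \<and> Zp n 0 p = pBell n p"
proof (intro conjI)
  show "Zp (n + 1) m p = real (m + 1) / real (m + p + 1) * Zp n (m + 1) p + real m * Zp n m p"
    by (rule Zp_Suc_left)
  show "Zp 0 m p = 1"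
    using sum_stirling1s_pBell[of m p] by (simp add: Zp_def)
  show "Zp n 0 p = pBell n p"
    by (simp add: Zp_def stirling1s_0)
qed

end
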